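(* For all $n\geq 2$ and $0\leq k\leq n-1$, $$Q_{n,k}(x,t)-Q_{n,k}(x-t-1,t)=(t+1)(n+k-1)\,Q_{n-1,k}(x,t).$$
   Context: Define polynomials $Q_m(x,y,z,t)$ by $Q_1=1$ and $Q_{m+1}=[x+mz+(y+t)(m+y\partial_y)]Q_m$ for $m\ge1$ ($\partial_y$ the partial derivative in $y$), and define $Q_{m,k}(x,t)$ by $Q_m(x,y,1,t)=\sum_{k=0}^{m-1}Q_{m,k}(x,t)y^k$, with the convention $Q_{m,k}=0$ if $k<0$ or $k\geq m$. *)

theory Defs
  imports "HOL-Computational_Algebra.Polynomial"
begin

text \<open>Q_m(x,y,z,t) viewed as a polynomial in y whose coefficients are evaluated at
  ring elements x, z, t.  Q_1 = 1 and
  Q_{m+1} = [x + m z + (y+t)(m + y d/dy)] Q_m.  (Index 0 is unused; set to 0.)\<close>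
fun Qpoly :: "nat \<Rightarrow> 'a::idom \<Rightarrow> 'a \<Rightarrow> 'a \<Rightarrow> 'a poly" where
  "Qpoly 0 x z t = 0"
| "Qpoly (Suc 0) x z t = 1"
| "Qpoly (Suc (Suc m)) x z t =
     (let Q = Qpoly (Suc m) x z t; mm = of_nat (Suc m) in
       smult (x + mm * z) Q + [:t, 1:] * (smult mm Q + [:0, 1:] * pderiv Q))"

definition Qc :: "nat \<Rightarrow> nat \<Rightarrow> 'a::idom \<Rightarrow> 'a \<Rightarrow> 'a" where
  "Qc m k x t = coeff (Qpoly m x 1 t) k"

end

theory Submission
  imports Defs
begin

text \<open>Comparing coefficients of y^k in the recurrence (with z = 1) gives
  Q_{m+1,k} = (x + m + (m+k) t) Q_{m,k} + (m+k-1) Q_{m,k-1}.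
  The factor c(x) = x + m + (m+k) t satisfies c(x - t - 1) = c(x) - (t + 1), and it grows by
  t + 1 when m grows by one; with these two observations the identity for m + 1 follows from
  the identity for m (used for the indices k and k - 1) by a direct computation.\<close>

lemma Qc_1: "Qc (Suc 0) k x t = (if k = 0 then 1 else 0)"
  by (simp add: Qc_def)

lemma Qc_Suc_0:
  assumes "m \<ge> 1"
  shows "Qc (Suc m) 0 x t = (x + of_nat m + t * of_nat m) * Qc m 0 x t"
proof -
  obtain j where "m = Suc j" using assms by (cases m) auto
  then show ?thesis by (simp add: Qc_def Let_def algebra_simps)
qed

lemma Qc_Suc_Suc:
  assumes "m \<ge> 1"
  shows "Qc (Suc m) (Suc k) x t
    = (x + of_nat m + t * of_nat (m + Suc k)) * Qc m (Suc k) x t + of_nat (m + k) * Qc m k x t"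
proof -
  obtain j where "m = Suc j" using assms by (cases m) auto
  then show ?thesis by (cases k) (simp_all add: Qc_def Let_def coeff_pderiv algebra_simps)
qed

lemma Qc_Suc_diff_shift:
  fixes x t :: "'a::idom"
  assumes "m \<ge> 1"
  shows "Qc (Suc m) k x t - Qc (Suc m) k (x - t - 1) t = (t + 1) * of_nat (m + k) * Qc m k x t"
  using assms
proof (induction m arbitrary: k x rule: nat_induct_at_least)
  case base
  show ?case
    by (cases k) (simp_all add: Qc_Suc_0 Qc_Suc_Suc Qc_1 algebra_simps)
next
  case (Suc m)
  have shifted: "Qc (Suc m) i (x - t - 1) t = Qc (Suc m) i x t - (t + 1) * of_nat (m + i) * Qc m i x t"
    for i using Suc.IH[of i x] by (simp add: algebra_simps)
  have "Suc m \<ge> 1" by simp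
  show ?case
  proof (cases k)
    case 0
    show ?thesis
      unfolding 0 Qc_Suc_0[OF \<open>Suc m \<ge> 1\<close>] shifted Qc_Suc_0[OF \<open>m \<ge> 1\<close>]
      by (simp add: algebra_simps)
  next
    case (Suc j)
    show ?thesis
      unfolding Suc Qc_Suc_Suc[OF \<open>Suc m \<ge> 1\<close>] shifted
      by (simp add: Qc_Suc_Suc[OF \<open>m \<ge> 1\<close>] algebra_simps)
  qed
qed

theorem lemma6p2:
  fixes x t :: "'a::idom" and n k :: nat
  assumes "n \<ge> 2" and "k \<le> n - 1"
  shows "Qc n k x t - Qc n k (x - t - 1) t = (t + 1) * of_nat (n + k - 1) * Qc (n - 1) k x t"
proof -
  obtain m where "n = Suc m" and "m \<ge> 1" using assms(1) by (cases n) auto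
  then show ?thesis using Qc_Suc_diff_shift[of m k x t] by simp
qed

end
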